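(* Let $X$ be a random variable taking values in $\{0,1,2,\dots\}$ with finite mean, probability mass function $p_X$ and probability generating function $\Psi_X(t)=\mathrm{E}[t^X]$, $t\in[0,1]$, and suppose $X\in\Delta$. For $\mu>0$ set $D(t,\mu)=\Psi_X'(t)-\mu\Psi_X(t)$. For any natural number $k\ge 0$ let $f_k(\mu)=e^{-\mu}\left(1+\mu+\frac{\mu^2}{2!}+\dots+\frac{\mu^k}{k!}\right)$ and $$T^{(k)}=f_k(\mu)-p_X(0)\left(1+\mu+\dots+\frac{\mu^k}{k!}\right).$$ Then for any $\mu>0$ and any natural number $k$, $$\frac{1}{1+\mu+\dots+\frac{\mu^k}{k!}}\,|T^{(k)}|\le \int_0^1 |D(t,\mu)|\,dt\le e^{\mu}\,|T^{(k)}|.$$ In particular, for $k=0$, $$|e^{-\mu}-p_X(0)|\le \int_0^1|D(t,\mu)|\,dt\le e^{\mu}|e^{-\mu}-p_X(0)|.$$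
   Context: $\Delta$ denotes the class of distributions of random variables $X$ with values in $\{0,1,2,\dots\}$ (with finite mean) such that, for every $\mu>0$, the function $t\mapsto D(t,\mu)=\Psi_X'(t)-\mu\Psi_X(t)$ is either nonnegative for all $t\in[0,1]$ or nonpositive for all $t\in[0,1]$, where $\Psi_X(t)=\mathrm{E}[t^X]$ is the probability generating function and $\Psi_X'$ its derivative. *)

theory Defs
  imports "HOL-Probability.Probability"
begin

definition finite_mean :: "nat pmf \<Rightarrow> bool" where
  "finite_mean p \<longleftrightarrow> summable (\<lambda>n. real n * pmf p n)"

definition pgf :: "nat pmf \<Rightarrow> real \<Rightarrow> real" where
  "pgf p t = (\<Sum>n. pmf p n * t ^ n)"

definition pgf_deriv :: "nat pmf \<Rightarrow> real \<Rightarrow> real" where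
  "pgf_deriv p t = (THE d. (pgf p has_real_derivative d) (at t within {0..1}))"

definition D_fun :: "nat pmf \<Rightarrow> real \<Rightarrow> real \<Rightarrow> real" where
  "D_fun p t \<mu> = pgf_deriv p t - \<mu> * pgf p t"

definition in_Delta :: "nat pmf \<Rightarrow> bool" where
  "in_Delta p \<longleftrightarrow> finite_mean p \<and>
     (\<forall>\<mu>>0. (\<forall>t\<in>{0..1}. D_fun p t \<mu> \<ge> 0) \<or> (\<forall>t\<in>{0..1}. D_fun p t \<mu> \<le> 0))"

definition f_k :: "nat \<Rightarrow> real \<Rightarrow> real" where
  "f_k k \<mu> = exp (- \<mu>) * (\<Sum>i\<le>k. \<mu> ^ i / fact i)"

definition T_k :: "nat pmf \<Rightarrow> nat \<Rightarrow> real \<Rightarrow> real" where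
  "T_k p k \<mu> = f_k k \<mu> - pmf p 0 * (\<Sum>i\<le>k. \<mu> ^ i / fact i)"

end

theory Submission imports Defs begin

text \<open>With the integrating factor \<open>exp (-\<mu> t)\<close> one has
  \<open>(exp (-\<mu> t) \<Psi>(t))' = exp (-\<mu> t) D(t,\<mu>)\<close>, so \<open>\<integral>\<^sub>0\<^sup>1 exp (-\<mu> t) D(t,\<mu>) dt = exp (-\<mu>) - p(0)\<close>.
  For \<open>X \<in> \<Delta>\<close> the function \<open>D(\<cdot>,\<mu>)\<close> has constant sign, so \<open>|exp (-\<mu>) - p(0)|\<close> is the
  integral of \<open>|D|\<close> against a weight between \<open>exp (-\<mu>)\<close> and \<open>1\<close>. Finally
  \<open>T_k = (exp (-\<mu>) - p(0)) (1 + \<mu> + \<dots> + \<mu>\<^sup>k/k!)\<close>, and the second factor is at least 1.\<close>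

lemma pmf_sums_one: "pmf p sums 1" for p :: "nat pmf"
proof -
  have "integrable (count_space UNIV) (pmf p)"
    by (simp add: integrable_pmf)
  then have "pmf p sums integral\<^sup>L (count_space UNIV) (pmf p)"
    by (rule sums_integral_count_space_nat)
  moreover have "integral\<^sup>L (count_space UNIV) (pmf p) = 1"
    by (subst integral_eq_nn_integral) (auto simp: nn_integral_pmf)
  ultimately show ?thesis by simp
qed

lemma pgf_one: "pgf p 1 = 1"
  unfolding pgf_def using pmf_sums_one sums_unique by fastforce

lemma pgf_zero: "pgf p 0 = pmf p 0"
  unfolding pgf_def using powser_zero[of "pmf p"] by simp

lemma continuous_on_pgf: "continuous_on {0..1} (pgf p)"
proof -
  have "uniform_limit {0..1::real} (\<lambda>n t. \<Sum>i<n. pmf p i * t ^ i) (pgf p) sequentially"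
    unfolding pgf_def[abs_def]
    by (rule Weierstrass_m_test[where M = "pmf p"])
       (auto simp: abs_mult intro!: mult_left_le power_le_one sums_summable[OF pmf_sums_one])
  moreover have "\<forall>\<^sub>F n in sequentially. continuous_on {0..1::real} (\<lambda>t. \<Sum>i<n. pmf p i * t ^ i)"
    by (intro always_eventually allI) (auto intro!: continuous_intros)
  ultimately show ?thesis
    by (intro uniform_limit_theorem[where F = sequentially]) simp_all
qed

lemma has_real_derivative_pgf:
  assumes "t \<in> {0<..<1}"
  shows "(pgf p has_real_derivative pgf_deriv p t) (at t)"
proof -
  have "summable (\<lambda>n. pmf p n * 1 ^ n)"
    using sums_summable[OF pmf_sums_one] by simp
  then have deriv: "(pgf p has_real_derivative (\<Sum>n. diffs (pmf p) n * t ^ n)) (at t)"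
    unfolding pgf_def[abs_def] using termdiffs_strong[of "pmf p" 1 t] assms by simp
  have "at t within {0..1} = at t"
    using assms by (intro at_within_interior) simp
  then have "pgf_deriv p t = (\<Sum>n. diffs (pmf p) n * t ^ n)"
    unfolding pgf_deriv_def using deriv DERIV_unique by (intro the_equality) auto
  with deriv show ?thesis by simp
qed

lemma integrable_D_fun: "(\<lambda>t. D_fun p t \<mu>) integrable_on {0..1}"
proof -
  have "(pgf_deriv p has_integral pgf p 1 - pgf p 0) {0..1}"
    by (rule fundamental_theorem_of_calculus_interior)
       (auto simp: continuous_on_pgf has_real_derivative_iff_has_vector_derivative[symmetric]
             intro!: has_real_derivative_pgf)
  moreover have "(\<lambda>t. \<mu> * pgf p t) integrable_on {0..1}"
    by (intro integrable_continuous_interval continuous_intros continuous_on_pgf)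
  ultimately show ?thesis
    unfolding D_fun_def by (intro integrable_diff) (rule has_integral_integrable)
qed

lemma has_integral_exp_D_fun:
  "((\<lambda>t. exp (- \<mu> * t) * D_fun p t \<mu>) has_integral exp (- \<mu>) - pmf p 0) {0..1}"
proof -
  have "((\<lambda>t. exp (- \<mu> * t) * pgf p t) has_real_derivative exp (- \<mu> * t) * D_fun p t \<mu>) (at t)"
    if "t \<in> {0<..<1}" for t
    using has_real_derivative_pgf[OF that]
    by (auto intro!: derivative_eq_intros simp: D_fun_def algebra_simps)
  then have "((\<lambda>t. exp (- \<mu> * t) * D_fun p t \<mu>) has_integral
      exp (- \<mu> * 1) * pgf p 1 - exp (- \<mu> * 0) * pgf p 0) {0..1}"
    by (intro fundamental_theorem_of_calculus_interior)
       (auto simp: has_real_derivative_iff_has_vector_derivative[symmetric]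
             intro!: continuous_intros continuous_on_pgf)
  then show ?thesis by (simp add: pgf_one pgf_zero)
qed

lemma abs_has_integral_weighted_bounds:
  fixes f w :: "real \<Rightarrow> real"
  assumes weighted: "((\<lambda>t. w t * f t) has_integral J) S"
    and f_int: "f integrable_on S"
    and sign: "(\<forall>t\<in>S. f t \<ge> 0) \<or> (\<forall>t\<in>S. f t \<le> 0)"
    and w_bounds: "\<And>t. t \<in> S \<Longrightarrow> m \<le> w t \<and> w t \<le> M" and "0 \<le> m"
  shows "m * integral S (\<lambda>t. \<bar>f t\<bar>) \<le> \<bar>J\<bar> \<and> \<bar>J\<bar> \<le> M * integral S (\<lambda>t. \<bar>f t\<bar>)"
proof -
  obtain s :: real where s: "\<bar>s\<bar> = 1" and abs_f: "\<And>t. t \<in> S \<Longrightarrow> \<bar>f t\<bar> = s * f t"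
    using sign that[of 1] that[of "-1"] by force
  have "((\<lambda>t. s * (w t * f t)) has_integral s * J) S"
    using weighted by (rule has_integral_mult_right)
  then have abs_weighted: "((\<lambda>t. w t * \<bar>f t\<bar>) has_integral s * J) S"
    by (rule has_integral_cong[THEN iffD1, rotated]) (simp add: abs_f)
  have "((\<lambda>t. s * f t) has_integral s * integral S f) S"
    using f_int by (intro has_integral_mult_right) (rule integrable_integral)
  then have abs_int: "((\<lambda>t. \<bar>f t\<bar>) has_integral integral S (\<lambda>t. \<bar>f t\<bar>)) S"
    by (metis (no_types, lifting) abs_f has_integral_cong has_integral_integrable_integral)
  have "0 \<le> s * J"
    using abs_weighted by (rule has_integral_nonneg)
      (use w_bounds \<open>0 \<le> m\<close> in \<open>force intro: mult_nonneg_nonneg\<close>)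
  then have "\<bar>J\<bar> = s * J"
    using s by (auto simp: abs_if split: if_splits)
  moreover have "m * integral S (\<lambda>t. \<bar>f t\<bar>) \<le> s * J"
    by (rule has_integral_le[OF has_integral_mult_right[OF abs_int] abs_weighted])
       (simp add: w_bounds mult_right_mono)
  moreover have "s * J \<le> M * integral S (\<lambda>t. \<bar>f t\<bar>)"
    by (rule has_integral_le[OF abs_weighted has_integral_mult_right[OF abs_int]])
       (simp add: w_bounds mult_right_mono)
  ultimately show ?thesis by simp
qed

lemma exp_partial_sum_ge_one:
  assumes "0 \<le> x"
  shows "1 \<le> (\<Sum>i\<le>k. x ^ i / fact i :: real)"
proof -
  have "(\<Sum>i\<le>k. x ^ i / fact i) = 1 + (\<Sum>i\<in>{1..k}. x ^ i / fact i)"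
    by (simp add: atMost_atLeast0 sum.atLeast_Suc_atMost)
  moreover have "0 \<le> (\<Sum>i\<in>{1..k}. x ^ i / fact i)"
    using assms by (intro sum_nonneg) auto
  ultimately show ?thesis by simp
qed

lemma T_k_eq: "T_k p k \<mu> = (\<Sum>i\<le>k. \<mu> ^ i / fact i) * (exp (- \<mu>) - pmf p 0)"
  unfolding T_k_def f_k_def by (simp add: algebra_simps)

theorem proposition1:
  fixes p :: "nat pmf" and \<mu> :: real and k :: nat
  assumes "in_Delta p" and "\<mu> > 0"
  shows "(1 / (\<Sum>i\<le>k. \<mu> ^ i / fact i)) * \<bar>T_k p k \<mu>\<bar>
            \<le> integral {0..1} (\<lambda>t. \<bar>D_fun p t \<mu>\<bar>)
      \<and> integral {0..1} (\<lambda>t. \<bar>D_fun p t \<mu>\<bar>) \<le> exp \<mu> * \<bar>T_k p k \<mu>\<bar>"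
proof -
  define S where "S = (\<Sum>i\<le>k. \<mu> ^ i / fact i)"
  define I where "I = integral {0..1} (\<lambda>t. \<bar>D_fun p t \<mu>\<bar>)"
  have "exp (- \<mu>) \<le> exp (- \<mu> * t) \<and> exp (- \<mu> * t) \<le> 1" if "t \<in> {0..1}" for t
    using that \<open>\<mu> > 0\<close> by (auto simp: mult_left_le)
  then have "exp (- \<mu>) * I \<le> \<bar>exp (- \<mu>) - pmf p 0\<bar> \<and> \<bar>exp (- \<mu>) - pmf p 0\<bar> \<le> 1 * I"
    unfolding I_def using \<open>in_Delta p\<close> \<open>\<mu> > 0\<close>
    by (intro abs_has_integral_weighted_bounds[OF has_integral_exp_D_fun integrable_D_fun])
       (auto simp: in_Delta_def)
  then have bounds: "exp (- \<mu>) * I \<le> \<bar>exp (- \<mu>) - pmf p 0\<bar> \<and> \<bar>exp (- \<mu>) - pmf p 0\<bar> \<le> I"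
    by simp
  have "1 \<le> S"
    unfolding S_def using \<open>\<mu> > 0\<close> by (intro exp_partial_sum_ge_one) simp
  have abs_T: "\<bar>T_k p k \<mu>\<bar> = S * \<bar>exp (- \<mu>) - pmf p 0\<bar>"
    using \<open>1 \<le> S\<close> by (simp add: T_k_eq S_def abs_mult)
  have "I \<le> exp \<mu> * \<bar>exp (- \<mu>) - pmf p 0\<bar>"
    using bounds by (simp add: exp_minus field_simps)
  also have "\<dots> \<le> exp \<mu> * \<bar>T_k p k \<mu>\<bar>"
    unfolding abs_T using \<open>1 \<le> S\<close> mult_right_mono[of 1 S] by simp
  finally show ?thesis
    using bounds \<open>1 \<le> S\<close> unfolding abs_T I_def S_def by simp
qed

end
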